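(* Let $S$ be a Riemannian circle and consider a tightening sequence for $S$ with tightened segments $Q_i$ and maps $\pi^{(i)}\colon S\to S_i$. If the tightening sequence is completely disjoint and $\sum_{i=0}^\infty|Q_i|<|S|$, then $\delta(x,y)=\lim_{i\to\infty}d_{S_i}(\pi^{(i)}(x),\pi^{(i)}(y))$ (for $x,y\in S$) is a well-defined pseudometric on $S$, and the induced metric quotient $S_\infty$ of $(S,\delta)$ is a Riemannian circle of length $\lim_{i\to\infty}|S_i|$.
   Context: A Riemannian circle is a circle with its length metric, of length $|S|$. Tightening sequence for $S$: Riemannian circles $S_0=S,S_1,\dots$, spaces $P_0,P_1,\dots$ (each a compact interval or Riemannian circle), maps $\iota_i\colon P_i\hookrightarrow S_i$, $\varphi_i\colon P_i\to S_{i+1}$, such that for each $i$ either (a) $\iota_i,\varphi_i$ are continuous unit-speed paths, $\varphi_i$ is injective on the interior $\mathring P_i$, $|P_i|\ge|S|/2$, $|S_{i+1}|<|S_i|$; or (b) $P_i=S_i=S_{i+1}$ with $\iota_i,\varphi_i$ identities. In case (a), $Q_i=S_i\setminus\iota_i(\mathring P_i)$ and $\bar Q_i=S_{i+1}\setminus\varphi_i(\mathring P_i)$ are closed segments with $|\bar Q_i|<|Q_i|$; in case (b) $Q_i=\bar Q_i=\emptyset$. The map $\pi_i\colon S_i\to S_{i+1}$ is $\varphi_i\circ\iota_i^{-1}$ on $\iota_i(P_i)$ and affine from $Q_i$ onto $\bar Q_i$; $\pi^{(i)}=\pi_{i-1}\circ\cdots\circ\pi_0$ ($\pi^{(0)}=\mathrm{id}$).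 Let $\mathring P_{0,0}=S$, $\mathring P_{0,j+1}=\mathring P_{0,j}\cap\iota_j(\mathring P_j)$ (viewing $\mathring P_{0,j}\subset S_j$). The sequence is completely disjoint if $Q_i\subset\mathring P_{0,i}$ in $S_i$ for every $i$. *)

theory Defs
  imports "HOL-Analysis.Analysis"
begin

(* Model of a Riemannian circle of length L > 0: the round circle of radius L/(2 pi) in the
   complex plane, equipped with its length (arc-length) metric. *)
definition rcircle :: "real \<Rightarrow> complex set" where
  "rcircle L = sphere 0 (L / (2 * pi))"

definition cdist :: "real \<Rightarrow> complex \<Rightarrow> complex \<Rightarrow> real" where
  "cdist L z w = L / (2 * pi) * \<bar>Arg (z / w)\<bar>"

definition curve_length :: "('a \<Rightarrow> 'a \<Rightarrow> real) \<Rightarrow> (real \<Rightarrow> 'a) \<Rightarrow> real \<Rightarrow> real \<Rightarrow> ereal" where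
  "curve_length d \<gamma> s t =
     (SUP np \<in> {(n, p). p 0 = s \<and> p n = t \<and> (\<forall>k<n. p k \<le> p (Suc k))}.
        ereal (\<Sum>k<fst np. d (\<gamma> (snd np k)) (\<gamma> (snd np (Suc k)))))"

definition unit_speed_path :: "real \<Rightarrow> real set \<Rightarrow> (real \<Rightarrow> complex) \<Rightarrow> bool" where
  "unit_speed_path L A \<gamma> \<longleftrightarrow> continuous_on A \<gamma> \<and> \<gamma> ` A \<subseteq> rcircle L \<and>
     (\<forall>s\<in>A. \<forall>t\<in>A. s \<le> t \<longrightarrow> curve_length (cdist L) \<gamma> s t = ereal (t - s))"

(* Data of a tightening sequence:
   L i = |S_i| (S_i = rcircle (L i)), tight i = case (a) holds at step i (otherwise case (b)),
   in case (a): P_i = [0, a i], iota_i = io i, phi_i = ph i;  pr i = pi_i : S_i -> S_{i+1}. *)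

definition Qset :: "(nat \<Rightarrow> real) \<Rightarrow> (nat \<Rightarrow> bool) \<Rightarrow> (nat \<Rightarrow> real) \<Rightarrow> (nat \<Rightarrow> real \<Rightarrow> complex) \<Rightarrow> nat \<Rightarrow> complex set" where
  "Qset L tight a io i = (if tight i then rcircle (L i) - io i ` {0<..<a i} else {})"

definition Qbarset :: "(nat \<Rightarrow> real) \<Rightarrow> (nat \<Rightarrow> bool) \<Rightarrow> (nat \<Rightarrow> real) \<Rightarrow> (nat \<Rightarrow> real \<Rightarrow> complex) \<Rightarrow> nat \<Rightarrow> complex set" where
  "Qbarset L tight a ph i = (if tight i then rcircle (L (Suc i)) - ph i ` {0<..<a i} else {})"

definition Qlen :: "(nat \<Rightarrow> real) \<Rightarrow> (nat \<Rightarrow> bool) \<Rightarrow> (nat \<Rightarrow> real) \<Rightarrow> nat \<Rightarrow> real" where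
  "Qlen L tight a i = (if tight i then L i - a i else 0)"

definition Qbarlen :: "(nat \<Rightarrow> real) \<Rightarrow> (nat \<Rightarrow> bool) \<Rightarrow> (nat \<Rightarrow> real) \<Rightarrow> nat \<Rightarrow> real" where
  "Qbarlen L tight a i = (if tight i then L (Suc i) - a i else 0)"

definition tightening_step ::
  "(nat \<Rightarrow> real) \<Rightarrow> (nat \<Rightarrow> bool) \<Rightarrow> (nat \<Rightarrow> real) \<Rightarrow> (nat \<Rightarrow> real \<Rightarrow> complex) \<Rightarrow>
   (nat \<Rightarrow> real \<Rightarrow> complex) \<Rightarrow> (nat \<Rightarrow> complex \<Rightarrow> complex) \<Rightarrow> nat \<Rightarrow> bool" where
  "tightening_step L tight a io ph pr i \<longleftrightarrow>
     (if tight i then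
        \<comment> \<open>case (a)\<close>
        0 < a i \<and> a i \<ge> L 0 / 2 \<and>
        unit_speed_path (L i) {0..a i} (io i) \<and> inj_on (io i) {0..a i} \<and>
        unit_speed_path (L (Suc i)) {0..a i} (ph i) \<and> inj_on (ph i) {0<..<a i} \<and>
        L (Suc i) < L i \<and>
        \<comment> \<open>Q_i, Qbar_i closed segments with |Qbar_i| < |Q_i|\<close>
        (\<exists>\<alpha> \<beta>. unit_speed_path (L i) {0..Qlen L tight a i} \<alpha> \<and>
                 \<alpha> ` {0..Qlen L tight a i} = Qset L tight a io i \<and>
                 unit_speed_path (L (Suc i)) {0..Qbarlen L tight a i} \<beta> \<and>
                 \<beta> ` {0..Qbarlen L tight a i} = Qbarset L tight a ph i \<and>
                 0 \<le> Qbarlen L tight a i \<and> Qbarlen L tight a i < Qlen L tight a i \<and>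
                 \<comment> \<open>pi_i = phi_i o iota_i^-1 on iota_i(P_i) and affine from Q_i onto Qbar_i\<close>
                 (\<forall>t\<in>{0..a i}. pr i (io i t) = ph i t) \<and>
                 (\<forall>t\<in>{0..Qlen L tight a i}.
                    pr i (\<alpha> t) = \<beta> (t * Qbarlen L tight a i / Qlen L tight a i)))
      else
        \<comment> \<open>case (b): P_i = S_i = S_{i+1}, all maps identities\<close>
        L (Suc i) = L i \<and> (\<forall>z\<in>rcircle (L i). pr i z = z))"

definition tightening_seq ::
  "(nat \<Rightarrow> real) \<Rightarrow> (nat \<Rightarrow> bool) \<Rightarrow> (nat \<Rightarrow> real) \<Rightarrow> (nat \<Rightarrow> real \<Rightarrow> complex) \<Rightarrow>
   (nat \<Rightarrow> real \<Rightarrow> complex) \<Rightarrow> (nat \<Rightarrow> complex \<Rightarrow> complex) \<Rightarrow> bool" where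
  "tightening_seq L tight a io ph pr \<longleftrightarrow>
     (\<forall>i. 0 < L i) \<and> (\<forall>i. tightening_step L tight a io ph pr i)"

primrec pic :: "(nat \<Rightarrow> complex \<Rightarrow> complex) \<Rightarrow> nat \<Rightarrow> complex \<Rightarrow> complex" where
  "pic pr 0 = id"
| "pic pr (Suc i) = pr i \<circ> pic pr i"

definition Iset :: "(nat \<Rightarrow> real) \<Rightarrow> (nat \<Rightarrow> bool) \<Rightarrow> (nat \<Rightarrow> real) \<Rightarrow> (nat \<Rightarrow> real \<Rightarrow> complex) \<Rightarrow> nat \<Rightarrow> complex set" where
  "Iset L tight a io i = (if tight i then io i ` {0<..<a i} else rcircle (L i))"

(* P_{0,j}^circ, viewed as a subset of S_j (transported by the maps pi) *)
primrec P0 :: "(nat \<Rightarrow> real) \<Rightarrow> (nat \<Rightarrow> bool) \<Rightarrow> (nat \<Rightarrow> real) \<Rightarrow> (nat \<Rightarrow> real \<Rightarrow> complex) \<Rightarrow>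
   (nat \<Rightarrow> complex \<Rightarrow> complex) \<Rightarrow> nat \<Rightarrow> complex set" where
  "P0 L tight a io pr 0 = rcircle (L 0)"
| "P0 L tight a io pr (Suc j) = pr j ` (P0 L tight a io pr j \<inter> Iset L tight a io j)"

definition completely_disjoint ::
  "(nat \<Rightarrow> real) \<Rightarrow> (nat \<Rightarrow> bool) \<Rightarrow> (nat \<Rightarrow> real) \<Rightarrow> (nat \<Rightarrow> real \<Rightarrow> complex) \<Rightarrow>
   (nat \<Rightarrow> complex \<Rightarrow> complex) \<Rightarrow> bool" where
  "completely_disjoint L tight a io pr \<longleftrightarrow> (\<forall>i. Qset L tight a io i \<subseteq> P0 L tight a io pr i)"

definition pseudometric_on :: "'a set \<Rightarrow> ('a \<Rightarrow> 'a \<Rightarrow> real) \<Rightarrow> bool" where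
  "pseudometric_on X d \<longleftrightarrow>
     (\<forall>x\<in>X. d x x = 0) \<and> (\<forall>x\<in>X. \<forall>y\<in>X. 0 \<le> d x y \<and> d x y = d y x) \<and>
     (\<forall>x\<in>X. \<forall>y\<in>X. \<forall>z\<in>X. d x z \<le> d x y + d y z)"

definition delta :: "(nat \<Rightarrow> real) \<Rightarrow> (nat \<Rightarrow> complex \<Rightarrow> complex) \<Rightarrow> complex \<Rightarrow> complex \<Rightarrow> real" where
  "delta L pr x y = lim (\<lambda>i. cdist (L i) (pic pr i x) (pic pr i y))"

end

(* Parametrize each S_i by arc length. In these coordinates every step pi_i lifts, up to
   orientation, to a nondecreasing 1-Lipschitz map G of the real line with
   G (x + |S_i|) = G x + |S_(i+1)|: an isometry on iota_i(P_i) followed by the affine contraction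
   of Q_i onto Qbar_i. Composing, pi^(i) lifts to such a map F_i from period |S_0| to period |S_i|,
   and because every step is 1-Lipschitz the increments F_i y - F_i x decrease with i. They
   converge to the increments of a map Phi of the same kind from period |S_0| to period
   lim |S_i|, so delta(x, y) is the distance between the Phi-coordinates of x and y on the circle
   of length lim |S_i|, onto which Phi induces a surjection: this circle is S_infinity.
   The limit length is positive since |P_i| >= |S|/2 already gives |S_i| >= |S|/2. *)

theory Submission
  imports Defs
begin

section \<open>Arc-length coordinates on circles\<close>

definition angle_norm :: "real \<Rightarrow> real" where
  "angle_norm \<theta> = \<bar>Arg (cis \<theta>)\<bar>"

lemma angle_norm_nonneg: "0 \<le> angle_norm \<theta>"
  by (simp add: angle_norm_def)

lemma angle_norm_le_abs: "angle_norm \<theta> \<le> \<bar>\<theta>\<bar>"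
proof (cases "\<theta> \<in> {-pi<..pi}")
  case True
  then show ?thesis by (simp add: angle_norm_def Arg_cis)
next
  case False
  then have "pi \<le> \<bar>\<theta>\<bar>" by auto
  moreover have "\<bar>Arg (cis \<theta>)\<bar> \<le> pi" using Arg_bounded[of "cis \<theta>"] by auto
  ultimately show ?thesis by (simp add: angle_norm_def)
qed

lemma angle_norm_eq_abs: "\<bar>\<theta>\<bar> \<le> pi \<Longrightarrow> angle_norm \<theta> = \<bar>\<theta>\<bar>"
proof (cases "\<theta> = -pi")
  case True
  have "cis (-pi) = -1" by (simp add: cis_cnj[symmetric])
  moreover have "Arg (-1) = pi" by (simp add: Arg_eq_pi)
  ultimately show ?thesis using True by (simp add: angle_norm_def)
next
  case False
  moreover assume "\<bar>\<theta>\<bar> \<le> pi"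
  ultimately have "\<theta> \<in> {-pi<..pi}" by auto
  then show ?thesis by (simp add: angle_norm_def Arg_cis)
qed

lemma angle_norm_add_2pi_multiple: "angle_norm (\<theta> + 2 * pi * of_int k) = angle_norm \<theta>"
  by (simp add: angle_norm_def cis_mult[symmetric] cis_multiple_2pi)

lemma angle_norm_minus: "angle_norm (- \<theta>) = angle_norm \<theta>"
  by (simp add: angle_norm_def cis_cnj[symmetric] Arg_cnj)

lemma angle_norm_triangle: "angle_norm (\<theta> + \<eta>) \<le> angle_norm \<theta> + angle_norm \<eta>"
proof -
  have "cis (\<theta> + \<eta>) = cis (Arg (cis \<theta>) + Arg (cis \<eta>))"
    by (simp add: cis_mult[symmetric] cis_Arg)
  then have "angle_norm (\<theta> + \<eta>) = angle_norm (Arg (cis \<theta>) + Arg (cis \<eta>))"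
    by (simp add: angle_norm_def)
  also have "\<dots> \<le> \<bar>Arg (cis \<theta>) + Arg (cis \<eta>)\<bar>" by (rule angle_norm_le_abs)
  also have "\<dots> \<le> angle_norm \<theta> + angle_norm \<eta>" by (simp add: angle_norm_def)
  finally show ?thesis .
qed

definition circle_point :: "real \<Rightarrow> real \<Rightarrow> complex" where
  "circle_point L x = rcis (L / (2 * pi)) (2 * pi * x / L)"

(* the distance from u to the lattice L\<int>, i.e. the distance in rcircle L between
   points whose arc-length coordinates differ by u *)
definition circle_norm :: "real \<Rightarrow> real \<Rightarrow> real" where
  "circle_norm L u = L / (2 * pi) * angle_norm (2 * pi * u / L)"

definition circle_coord :: "real \<Rightarrow> complex \<Rightarrow> real" where
  "circle_coord L z = (SOME x. x \<in> {0..<L} \<and> z = circle_point L x)"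

lemma floor_divide_mult_bounds:
  fixes x L :: real
  assumes "0 < L"
  shows "of_int \<lfloor>x / L\<rfloor> * L \<le> x" "x < of_int \<lfloor>x / L\<rfloor> * L + L"
proof -
  define k where "k = \<lfloor>x / L\<rfloor>"
  have "of_int k \<le> x / L" "x / L < of_int k + 1" unfolding k_def by linarith+
  then show "of_int \<lfloor>x / L\<rfloor> * L \<le> x" "x < of_int \<lfloor>x / L\<rfloor> * L + L"
    using assms unfolding k_def[symmetric] by (simp_all add: field_simps)
qed

lemma floor_decomposition:
  fixes L u :: real
  assumes "0 < L"
  obtains x k where "x \<in> {0..<L}" "u = x + of_int k * L"
  by (rule that[of "u - of_int \<lfloor>u / L\<rfloor> * L" "\<lfloor>u / L\<rfloor>"])
    (use floor_divide_mult_bounds[OF assms, of u] in auto)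

context
  fixes L :: real
  assumes L: "0 < L"
begin

lemma circle_norm_nonneg: "0 \<le> circle_norm L u"
  unfolding circle_norm_def using L by (simp add: angle_norm_nonneg)

lemma circle_norm_le_abs: "circle_norm L u \<le> \<bar>u\<bar>"
proof -
  have "circle_norm L u \<le> L / (2 * pi) * \<bar>2 * pi * u / L\<bar>"
    unfolding circle_norm_def using L by (intro mult_left_mono angle_norm_le_abs) auto
  also have "\<dots> = \<bar>u\<bar>" using L by (simp add: abs_mult)
  finally show ?thesis .
qed

lemma circle_norm_eq_abs: "\<bar>u\<bar> \<le> L / 2 \<Longrightarrow> circle_norm L u = \<bar>u\<bar>"
proof -
  assume "\<bar>u\<bar> \<le> L / 2"
  then have "\<bar>2 * pi * u / L\<bar> \<le> pi" using L by (simp add: abs_mult field_simps)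
  then show ?thesis unfolding circle_norm_def using L by (simp add: angle_norm_eq_abs abs_mult)
qed

lemma circle_norm_minus: "circle_norm L (- u) = circle_norm L u"
  unfolding circle_norm_def using angle_norm_minus[of "2 * pi * u / L"] by simp

lemma circle_norm_sign_mult: "\<sigma> \<in> {1, -1} \<Longrightarrow> circle_norm L (\<sigma> * u) = circle_norm L u"
  using circle_norm_minus by auto

lemma circle_norm_add_int_mult: "circle_norm L (u + of_int k * L) = circle_norm L u"
proof -
  have "2 * pi * (u + of_int k * L) / L = 2 * pi * u / L + 2 * pi * of_int k"
    using L by (simp add: field_simps)
  then show ?thesis unfolding circle_norm_def by (simp add: angle_norm_add_2pi_multiple)
qed

lemma circle_norm_triangle: "circle_norm L (u + v) \<le> circle_norm L u + circle_norm L v"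
proof -
  have "2 * pi * (u + v) / L = 2 * pi * u / L + 2 * pi * v / L"
    by (simp add: add_divide_distrib distrib_left)
  moreover have "L / (2 * pi) * angle_norm (2 * pi * u / L + 2 * pi * v / L)
      \<le> L / (2 * pi) * (angle_norm (2 * pi * u / L) + angle_norm (2 * pi * v / L))"
    using L by (intro mult_left_mono angle_norm_triangle) auto
  ultimately show ?thesis unfolding circle_norm_def by (simp add: distrib_left)
qed

lemma circle_norm_eq_min: "0 \<le> u \<Longrightarrow> u \<le> L \<Longrightarrow> circle_norm L u = min u (L - u)"
  using circle_norm_eq_abs[of u] circle_norm_eq_abs[of "u - L"] circle_norm_add_int_mult[of u "-1"]
  by (cases "u \<le> L / 2") auto

lemma circle_point_in_rcircle: "circle_point L x \<in> rcircle L"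
  using L by (simp add: circle_point_def rcircle_def norm_mult)

lemma circle_point_nonzero: "circle_point L x \<noteq> 0"
  using L by (simp add: circle_point_def)

lemma cdist_circle_point: "cdist L (circle_point L u) (circle_point L v) = circle_norm L (u - v)"
proof -
  have "circle_point L u / circle_point L v = cis (2 * pi * u / L - 2 * pi * v / L)"
    using L by (simp add: circle_point_def rcis_def cis_divide[symmetric])
  also have "2 * pi * u / L - 2 * pi * v / L = 2 * pi * (u - v) / L"
    by (simp add: diff_divide_distrib right_diff_distrib)
  finally show ?thesis by (simp add: cdist_def circle_norm_def angle_norm_def)
qed

lemma circle_point_add_int_mult: "circle_point L (x + of_int k * L) = circle_point L x"
proof -
  have "2 * pi * (x + of_int k * L) / L = 2 * pi * x / L + 2 * pi * of_int k"
    using L by (simp add: field_simps)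
  then show ?thesis
    by (simp add: circle_point_def rcis_def cis_mult[symmetric] cis_multiple_2pi)
qed

lemma circle_point_add_sign_int_mult:
  "\<sigma> \<in> {1, -1} \<Longrightarrow> circle_point L (x + \<sigma> * (of_int k * L)) = circle_point L x"
  using circle_point_add_int_mult[of x k] circle_point_add_int_mult[of x "- k"] by auto

lemma circle_point_add_sign_period: "\<sigma> \<in> {1, -1} \<Longrightarrow> circle_point L (x + \<sigma> * L) = circle_point L x"
  using circle_point_add_sign_int_mult[of \<sigma> x 1] by simp

lemma rcircle_circle_point:
  assumes "z \<in> rcircle L"
  obtains x where "x \<in> {0..<L}" "z = circle_point L x"
proof -
  have "norm z = L / (2 * pi)" using assms L by (simp add: rcircle_def)
  then have "circle_point L (L / (2 * pi) * Arg z) = rcis (norm z) (Arg z)"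
    using L by (simp add: circle_point_def)
  then have "circle_point L (L / (2 * pi) * Arg z) = z" by (simp add: rcis_cmod_Arg)
  moreover obtain x k where "x \<in> {0..<L}" "L / (2 * pi) * Arg z = x + of_int k * L"
    using floor_decomposition[OF L] .
  ultimately show ?thesis using that circle_point_add_int_mult[of x k] by metis
qed

lemma cdist_self: "z \<noteq> 0 \<Longrightarrow> cdist L z z = 0"
  by (simp add: cdist_def)

lemma cdist_commute: "z \<in> rcircle L \<Longrightarrow> w \<in> rcircle L \<Longrightarrow> cdist L z w = cdist L w z"
  by (metis rcircle_circle_point cdist_circle_point circle_norm_minus minus_diff_eq)

lemma circle_point_eq_imp_circle_norm_zero:
  "circle_point L u = circle_point L v \<Longrightarrow> circle_norm L (u - v) = 0"
  using cdist_circle_point[of u v] cdist_self[OF circle_point_nonzero[of v]] by simp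

lemma circle_point_inj:
  assumes "circle_point L u = circle_point L v" "\<bar>u - v\<bar> < L"
  shows "u = v"
proof -
  have "circle_norm L \<bar>u - v\<bar> = 0"
    using circle_point_eq_imp_circle_norm_zero[OF assms(1)] circle_norm_minus[of "u - v"]
    by (cases "u \<le> v") auto
  then show ?thesis
    using circle_norm_eq_min[of "\<bar>u - v\<bar>"] assms(2) by (auto simp: min_def split: if_splits)
qed


lemma circle_coord:
  assumes "z \<in> rcircle L"
  shows "circle_coord L z \<in> {0..<L}" "circle_point L (circle_coord L z) = z"
proof -
  have "\<exists>x. x \<in> {0..<L} \<and> z = circle_point L x" using rcircle_circle_point[OF assms] by blast
  then have "circle_coord L z \<in> {0..<L} \<and> z = circle_point L (circle_coord L z)"
    unfolding circle_coord_def by (rule someI_ex)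
  then show "circle_coord L z \<in> {0..<L}" "circle_point L (circle_coord L z) = z" by simp_all
qed

lemma circle_coord_circle_point: "x \<in> {0..<L} \<Longrightarrow> circle_coord L (circle_point L x) = x"
  using circle_coord[OF circle_point_in_rcircle, of x] circle_point_inj[of "circle_coord L (circle_point L x)" x]
  by auto

end

section \<open>Unit-speed paths\<close>

lemma unit_speed_path_cdist_le:
  assumes "unit_speed_path L A \<gamma>" "s \<in> A" "t \<in> A" "s \<le> t"
  shows "cdist L (\<gamma> s) (\<gamma> t) \<le> t - s"
proof -
  let ?p = "\<lambda>k::nat. if k = 0 then s else t"
  have "(1, ?p) \<in> {(n, p). p 0 = s \<and> p n = t \<and> (\<forall>k<n. p k \<le> p (Suc k))}"
    using assms(4) by auto
  then have "ereal (\<Sum>k<fst (1::nat, ?p). cdist L (\<gamma> (snd (1::nat, ?p) k)) (\<gamma> (snd (1::nat, ?p) (Suc k))))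
      \<le> curve_length (cdist L) \<gamma> s t"
    unfolding curve_length_def by (rule SUP_upper)
  then have "ereal (cdist L (\<gamma> s) (\<gamma> t)) \<le> curve_length (cdist L) \<gamma> s t" by simp
  also have "\<dots> = ereal (t - s)" using assms unfolding unit_speed_path_def by auto
  finally show ?thesis by simp
qed

lemma monotone_partition_bounds:
  fixes p :: "nat \<Rightarrow> real"
  assumes "\<forall>k<n. p k \<le> p (Suc k)" "k \<le> n"
  shows "p 0 \<le> p k \<and> p k \<le> p n"
proof -
  have "p i \<le> p j" if "i \<le> j" "j \<le> n" for i j
    using that
  proof (induction j)
    case (Suc j)
    then show ?case using assms(1) by (cases "i = Suc j") (auto intro: order_trans)
  qed simp
  then show ?thesis using assms(2) by simp
qed

lemma curve_length_le_increment:
  fixes h :: "real \<Rightarrow> real"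
  assumes "\<And>x y. s \<le> x \<Longrightarrow> x \<le> y \<Longrightarrow> y \<le> t \<Longrightarrow> d (\<gamma> x) (\<gamma> y) \<le> h y - h x"
  shows "curve_length d \<gamma> s t \<le> ereal (h t - h s)"
  unfolding curve_length_def
proof (rule SUP_least)
  fix np :: "nat \<times> (nat \<Rightarrow> real)"
  assume "np \<in> {(n, p). p 0 = s \<and> p n = t \<and> (\<forall>k<n. p k \<le> p (Suc k))}"
  then obtain n p where np: "np = (n, p)" and p: "p 0 = s" "\<forall>k<n. p k \<le> p (Suc k)" "t = p n"
    by auto
  have "(\<Sum>k<n. d (\<gamma> (p k)) (\<gamma> (p (Suc k)))) \<le> (\<Sum>k<n. h (p (Suc k)) - h (p k))"
  proof (rule sum_mono)
    fix k assume "k \<in> {..<n}"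
    then show "d (\<gamma> (p k)) (\<gamma> (p (Suc k))) \<le> h (p (Suc k)) - h (p k)"
      using monotone_partition_bounds[OF p(2), of k] monotone_partition_bounds[OF p(2), of "Suc k"] p
      by (intro assms) auto
  qed
  also have "\<dots> = h (p n) - h (p 0)" by (rule sum_lessThan_telescope)
  finally show "ereal (\<Sum>k<fst np. d (\<gamma> (snd np k)) (\<gamma> (snd np (Suc k)))) \<le> ereal (h t - h s)"
    using np p by simp
qed

lemma rcircle_path_lift:
  fixes S :: "'a::real_normed_vector set"
  assumes L: "0 < L" and S: "contractible S"
    and \<gamma>: "continuous_on S \<gamma>" "\<gamma> ` S \<subseteq> rcircle L"
  obtains \<phi> where "continuous_on S \<phi>" "\<And>t. t \<in> S \<Longrightarrow> \<gamma> t = circle_point L (\<phi> t)"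
proof -
  define r where "r = L / (2 * pi)"
  have r: "0 < r" using L unfolding r_def by simp
  have norm_\<gamma>: "norm (\<gamma> t) = r" if "t \<in> S" for t
    using \<gamma>(2) that unfolding rcircle_def r_def by auto
  have cont: "continuous_on S (\<lambda>t. \<gamma> t / complex_of_real r)"
    using r by (intro continuous_intros \<gamma>(1)) auto
  have nonzero: "\<gamma> t / complex_of_real r \<noteq> 0" if "t \<in> S" for t
    using norm_\<gamma>[OF that] r by fastforce
  obtain g where g: "continuous_on S g" "\<And>t. t \<in> S \<Longrightarrow> \<gamma> t / complex_of_real r = exp (g t)"
    using continuous_logarithm_on_contractible[OF cont S nonzero] by blast
  show ?thesis
  proof
    show "continuous_on S (\<lambda>t. r * Im (g t))" by (intro continuous_intros g(1))
    fix t assume t: "t \<in> S"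
    have "norm (\<gamma> t / complex_of_real r) = 1" using norm_\<gamma>[OF t] r by (simp add: norm_divide)
    then have "exp (Re (g t)) = 1" using g(2)[OF t] by (simp only: norm_exp_eq_Re)
    then have "exp (g t) = cis (Im (g t))" by (simp add: exp_eq_polar)
    then have "\<gamma> t = complex_of_real r * cis (Im (g t))"
      using g(2)[OF t] r by (simp add: divide_eq_eq mult.commute)
    moreover have "2 * pi * (r * Im (g t)) / L = Im (g t)" unfolding r_def using L by simp
    ultimately show "\<gamma> t = circle_point L (r * Im (g t))"
      by (simp add: circle_point_def rcis_def r_def)
  qed
qed

lemma lift_lipschitz_of_unit_speed_path:
  assumes L: "0 < L" and usp: "unit_speed_path L {0..a} \<gamma>"
    and \<phi>: "continuous_on {0..a} \<phi>" "\<And>t. t \<in> {0..a} \<Longrightarrow> \<gamma> t = circle_point L (\<phi> t)"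
  shows "1-lipschitz_on {0..a} \<phi>"
proof (rule locally_lipschitz_imp_lipschitz[OF \<phi>(1)])
  fix x y :: real assume x: "x \<in> {0..<a}" and "x < y"
  have "x \<in> {0..a}" "0 < L / 2" using x L by auto
  then obtain e where e: "0 < e"
    "\<And>z. z \<in> {0..a} \<Longrightarrow> dist z x < e \<Longrightarrow> dist (\<phi> z) (\<phi> x) < L / 2"
    using \<phi>(1) unfolding continuous_on_iff by blast
  define z where "z = min (min y a) (x + e / 2)"
  have z: "z \<in> {x<..y}" "z \<in> {0..a}" "dist z x < e"
    using x \<open>x < y\<close> e(1) unfolding z_def dist_real_def by auto
  have "\<bar>\<phi> z - \<phi> x\<bar> \<le> L / 2" using e(2)[OF z(2,3)] by (simp add: dist_real_def)
  then have "dist (\<phi> z) (\<phi> x) = circle_norm L (\<phi> x - \<phi> z)"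
    using circle_norm_eq_abs[OF L, of "\<phi> x - \<phi> z"] by (simp add: dist_real_def abs_minus_commute)
  also have "\<dots> = cdist L (\<gamma> x) (\<gamma> z)" using x z(2) by (simp add: \<phi>(2) cdist_circle_point[OF L])
  also have "\<dots> \<le> z - x" using x z by (intro unit_speed_path_cdist_le[OF usp]) auto
  finally show "\<exists>z\<in>{x<..y}. dist (\<phi> z) (\<phi> x) \<le> 1 * (z - x)" using z(1) by auto
qed simp

lemma continuous_inj_on_orientation:
  fixes \<phi> :: "real \<Rightarrow> real"
  assumes "continuous_on {a<..<b} \<phi>" "inj_on \<phi> {a<..<b}"
  obtains \<sigma> :: real where "\<sigma> \<in> {1, -1}"
    "\<And>s t. s \<in> {a<..<b} \<Longrightarrow> t \<in> {a<..<b} \<Longrightarrow> s \<le> t \<Longrightarrow>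
      \<bar>\<phi> t - \<phi> s\<bar> = \<sigma> * (\<phi> t - \<phi> s)"
proof -
  have mono_cases: "strict_mono_on {a<..<b} \<phi> \<or> strict_antimono_on {a<..<b} \<phi>"
    using injective_eq_monotone_map[of "{a<..<b}" \<phi>] assms by (simp add: is_interval_convex_1)
  define \<sigma> :: real where "\<sigma> = (if strict_mono_on {a<..<b} \<phi> then 1 else -1)"
  have "\<bar>\<phi> t - \<phi> s\<bar> = \<sigma> * (\<phi> t - \<phi> s)" if "s \<in> {a<..<b}" "t \<in> {a<..<b}" "s \<le> t" for s t
  proof (cases "s = t")
    case False
    with that have "s < t" by simp
    then have "\<phi> s < \<phi> t" if "strict_mono_on {a<..<b} \<phi>"
      using monotone_onD[OF that \<open>s \<in> _\<close> \<open>t \<in> _\<close>] by simp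
    moreover have "\<phi> t < \<phi> s" if "strict_antimono_on {a<..<b} \<phi>"
      using monotone_onD[OF that \<open>s \<in> _\<close> \<open>t \<in> _\<close> \<open>s < t\<close>] by simp
    ultimately show ?thesis using mono_cases unfolding \<sigma>_def by auto
  qed simp
  then show ?thesis using that[of \<sigma>] by (simp add: \<sigma>_def)
qed

lemma affine_of_interior_slope:
  fixes \<phi> :: "real \<Rightarrow> real"
  assumes a: "0 < a" and \<phi>: "continuous_on {0..a} \<phi>" and \<sigma>: "\<sigma> \<in> {1, -1}"
    and slope: "\<And>s t. s \<in> {0<..<a} \<Longrightarrow> t \<in> {0<..<a} \<Longrightarrow> s \<le> t \<Longrightarrow>
      \<sigma> * (\<phi> t - \<phi> s) = t - s"
    and t: "t \<in> {0..a}"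
  shows "\<phi> t = (\<phi> (a / 2) - \<sigma> * (a / 2)) + \<sigma> * t"
proof -
  have interior: "\<phi> t - \<sigma> * t = \<phi> (a / 2) - \<sigma> * (a / 2)" if "t \<in> {0<..<a}" for t
  proof (cases "a / 2 \<le> t")
    case True
    then have "\<sigma> * (\<phi> t - \<phi> (a / 2)) = t - a / 2" using that a by (intro slope) auto
    then show ?thesis using \<sigma> by (auto simp: algebra_simps)
  next
    case False
    then have "\<sigma> * (\<phi> (a / 2) - \<phi> t) = a / 2 - t" using that a by (intro slope) auto
    then show ?thesis using \<sigma> by (auto simp: algebra_simps)
  qed
  have "\<phi> t - \<sigma> * t = \<phi> (a / 2) - \<sigma> * (a / 2)"
  proof (rule continuous_constant_on_closure[of "{0<..<a}" "\<lambda>t. \<phi> t - \<sigma> * t"])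
    show "continuous_on (closure {0<..<a}) (\<lambda>t. \<phi> t - \<sigma> * t)"
      using a by (simp, intro continuous_intros \<phi>)
    show "t \<in> closure {0<..<a}" using a t by simp
  qed (rule interior)
  then show ?thesis by simp
qed

lemma unit_speed_path_injective_eq_arc:
  assumes L: "0 < L" and a: "0 < a" and usp: "unit_speed_path L {0..a} \<gamma>"
    and inj: "inj_on \<gamma> {0<..<a}"
  obtains x0 \<sigma> where "\<sigma> \<in> {1, -1}" "\<And>t. t \<in> {0..a} \<Longrightarrow> \<gamma> t = circle_point L (x0 + \<sigma> * t)"
proof -
  have "contractible {0..a}" by (simp add: convex_imp_contractible)
  moreover have "continuous_on {0..a} \<gamma>" "\<gamma> ` {0..a} \<subseteq> rcircle L"
    using usp unfolding unit_speed_path_def by auto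
  ultimately obtain \<phi> where \<phi>: "continuous_on {0..a} \<phi>"
    "\<And>t. t \<in> {0..a} \<Longrightarrow> \<gamma> t = circle_point L (\<phi> t)"
    using rcircle_path_lift[OF L] by blast
  have cont: "continuous_on {0<..<a} \<phi>" by (rule continuous_on_subset[OF \<phi>(1)]) auto
  have "inj_on \<phi> {0<..<a}" using inj \<phi>(2) by (auto simp: inj_on_def)
  then obtain \<sigma> :: real where \<sigma>: "\<sigma> \<in> {1, -1}"
    and mono: "\<And>s t. s \<in> {0<..<a} \<Longrightarrow> t \<in> {0<..<a} \<Longrightarrow> s \<le> t \<Longrightarrow>
      \<bar>\<phi> t - \<phi> s\<bar> = \<sigma> * (\<phi> t - \<phi> s)"
    using continuous_inj_on_orientation[OF cont] by blast
  \<comment> \<open>the monotone lift has slope \<sigma>: curve length bounds its increments from below,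
    the Lipschitz estimate from above\<close>
  have "t - s \<le> \<sigma> * (\<phi> t - \<phi> s)" if st: "s \<in> {0<..<a}" "t \<in> {0<..<a}" "s \<le> t" for s t
  proof -
    have "ereal (t - s) = curve_length (cdist L) \<gamma> s t"
      using usp st unfolding unit_speed_path_def by auto
    also have "\<dots> \<le> ereal (\<sigma> * \<phi> t - \<sigma> * \<phi> s)"
    proof (rule curve_length_le_increment)
      fix x y assume "s \<le> x" "x \<le> y" "y \<le> t"
      then have xy: "x \<in> {0<..<a}" "y \<in> {0<..<a}" using st by auto
      then have "cdist L (\<gamma> x) (\<gamma> y) = circle_norm L (\<phi> x - \<phi> y)"
        by (simp add: \<phi>(2) cdist_circle_point[OF L])
      also have "\<dots> \<le> \<bar>\<phi> y - \<phi> x\<bar>"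
        using circle_norm_le_abs[OF L, of "\<phi> x - \<phi> y"] by (simp add: abs_minus_commute)
      also have "\<dots> = \<sigma> * \<phi> y - \<sigma> * \<phi> x"
        using mono[OF xy \<open>x \<le> y\<close>] by (simp add: right_diff_distrib)
      finally show "cdist L (\<gamma> x) (\<gamma> y) \<le> \<sigma> * \<phi> y - \<sigma> * \<phi> x" .
    qed
    finally show ?thesis by (simp add: right_diff_distrib)
  qed
  moreover have "\<sigma> * (\<phi> t - \<phi> s) \<le> t - s" if "s \<in> {0<..<a}" "t \<in> {0<..<a}" "s \<le> t" for s t
    using mono[OF that] lipschitz_onD[OF lift_lipschitz_of_unit_speed_path[OF L usp \<phi>], of s t] that
    by (simp add: dist_real_def abs_minus_commute)
  ultimately have "\<sigma> * (\<phi> t - \<phi> s) = t - s" if "s \<in> {0<..<a}" "t \<in> {0<..<a}" "s \<le> t" for s t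
    using that by (meson order_antisym)
  then have affine: "\<phi> t = (\<phi> (a / 2) - \<sigma> * (a / 2)) + \<sigma> * t" if "t \<in> {0..a}" for t
    by (rule affine_of_interior_slope[OF a \<phi>(1) \<sigma> _ that])
  show ?thesis
  proof (rule that[OF \<sigma>])
    fix t assume t: "t \<in> {0..a}"
    show "\<gamma> t = circle_point L ((\<phi> (a / 2) - \<sigma> * (a / 2)) + \<sigma> * t)"
      by (simp only: \<phi>(2)[OF t] affine[OF t])
  qed
qed

context
  fixes L :: real
  assumes L: "0 < L"
begin

lemma rcircle_diff_open_arc:
  assumes a: "0 < a" "a \<le> L" and \<sigma>: "\<sigma> \<in> {1, -1}"
  shows "rcircle L - (\<lambda>t. circle_point L (x0 + \<sigma> * t)) ` {0<..<a}
       = (\<lambda>x. circle_point L (x0 + \<sigma> * x)) ` {a..L}"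
proof
  show "rcircle L - (\<lambda>t. circle_point L (x0 + \<sigma> * t)) ` {0<..<a}
      \<subseteq> (\<lambda>x. circle_point L (x0 + \<sigma> * x)) ` {a..L}"
  proof
    fix z assume z: "z \<in> rcircle L - (\<lambda>t. circle_point L (x0 + \<sigma> * t)) ` {0<..<a}"
    obtain w where w: "z = circle_point L w" using rcircle_circle_point[OF L] z by blast
    obtain x k where xk: "x \<in> {0..<L}" "\<sigma> * (w - x0) = x + of_int k * L"
      using floor_decomposition[OF L] by blast
    have "x0 + \<sigma> * x + \<sigma> * (of_int k * L) = w" using xk(2) \<sigma> by (auto simp: algebra_simps)
    then have zx: "z = circle_point L (x0 + \<sigma> * x)"
      using w circle_point_add_sign_int_mult[OF L \<sigma>, of "x0 + \<sigma> * x" k] by simp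
    show "z \<in> (\<lambda>x. circle_point L (x0 + \<sigma> * x)) ` {a..L}"
    proof (cases "x = 0")
      case True
      then have "z = circle_point L (x0 + \<sigma> * L)"
        using zx circle_point_add_sign_period[OF L \<sigma>, of x0] by simp
      then show ?thesis using a by auto
    next
      case False
      then have "x \<notin> {0<..<a}" using z zx by auto
      then show ?thesis using zx xk False by auto
    qed
  qed
  show "(\<lambda>x. circle_point L (x0 + \<sigma> * x)) ` {a..L}
      \<subseteq> rcircle L - (\<lambda>t. circle_point L (x0 + \<sigma> * t)) ` {0<..<a}"
  proof
    fix z assume "z \<in> (\<lambda>x. circle_point L (x0 + \<sigma> * x)) ` {a..L}"
    then obtain x where x: "x \<in> {a..L}" "z = circle_point L (x0 + \<sigma> * x)" by auto
    have "z \<notin> (\<lambda>t. circle_point L (x0 + \<sigma> * t)) ` {0<..<a}"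
    proof
      assume "z \<in> (\<lambda>t. circle_point L (x0 + \<sigma> * t)) ` {0<..<a}"
      then obtain t where t: "t \<in> {0<..<a}" "circle_point L (x0 + \<sigma> * x) = circle_point L (x0 + \<sigma> * t)"
        using x by auto
      have "circle_norm L (\<sigma> * (x - t)) = 0"
        using circle_point_eq_imp_circle_norm_zero[OF L t(2)] by (simp add: algebra_simps)
      then have "circle_norm L (x - t) = 0" using circle_norm_sign_mult[OF L \<sigma>] by simp
      moreover have "circle_norm L (x - t) = min (x - t) (L - (x - t))"
        using x t by (intro circle_norm_eq_min[OF L]) auto
      ultimately show False using x t by (auto simp: min_def split: if_splits)
    qed
    then show "z \<in> rcircle L - (\<lambda>t. circle_point L (x0 + \<sigma> * t)) ` {0<..<a}"
      using x circle_point_in_rcircle[OF L] by auto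
  qed
qed

lemma unit_speed_path_onto_arc:
  assumes l: "0 \<le> l" "l \<le> L / 2" and \<sigma>: "\<sigma> \<in> {1, -1}"
    and usp: "unit_speed_path L {0..l} \<alpha>"
    and img: "\<alpha> ` {0..l} = (\<lambda>x. circle_point L (x0 + \<sigma> * x)) ` {L - l..L}"
  shows "(\<forall>t\<in>{0..l}. \<alpha> t = circle_point L (x0 + \<sigma> * (L - l + t)))
    \<or> (\<forall>t\<in>{0..l}. \<alpha> t = circle_point L (x0 + \<sigma> * (L - t)))"
proof -
  have lip: "cdist L (\<alpha> t) (\<alpha> t') \<le> \<bar>t - t'\<bar>" if "t \<in> {0..l}" "t' \<in> {0..l}" for t t'
  proof (cases "t \<le> t'")
    case True
    then show ?thesis using unit_speed_path_cdist_le[OF usp that] by simp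
  next
    case False
    have "\<alpha> t \<in> rcircle L" "\<alpha> t' \<in> rcircle L" using usp that unfolding unit_speed_path_def by auto
    then show ?thesis
      using unit_speed_path_cdist_le[OF usp that(2,1)] False cdist_commute[OF L] by simp
  qed
  have dist_arc: "cdist L (circle_point L (x0 + \<sigma> * x)) (circle_point L (x0 + \<sigma> * y)) = \<bar>x - y\<bar>"
    if "x \<in> {L - l..L}" "y \<in> {L - l..L}" for x y
  proof -
    have "cdist L (circle_point L (x0 + \<sigma> * x)) (circle_point L (x0 + \<sigma> * y)) = circle_norm L (\<sigma> * (x - y))"
      by (simp add: cdist_circle_point[OF L] algebra_simps)
    also have "\<dots> = circle_norm L (x - y)" by (rule circle_norm_sign_mult[OF L \<sigma>])
    also have "\<dots> = \<bar>x - y\<bar>"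
      using that l by (intro circle_norm_eq_abs[OF L]) (simp add: abs_if)
    finally show ?thesis .
  qed
  have "circle_point L (x0 + \<sigma> * (L - l)) \<in> \<alpha> ` {0..l}" unfolding img using l by auto
  then obtain tp where tp: "tp \<in> {0..l}" "\<alpha> tp = circle_point L (x0 + \<sigma> * (L - l))" by auto
  have "circle_point L (x0 + \<sigma> * L) \<in> \<alpha> ` {0..l}" unfolding img using l by auto
  then obtain tq where tq: "tq \<in> {0..l}" "\<alpha> tq = circle_point L (x0 + \<sigma> * L)" by auto
  have "l \<le> \<bar>tq - tp\<bar>" using lip[OF tq(1) tp(1)] dist_arc[of L "L - l"] tp tq l by simp
  then have ends: "(tp = 0 \<and> tq = l) \<or> (tp = l \<and> tq = 0)" using tp tq by auto
  have on_arc: "\<bar>x - (L - l)\<bar> \<le> \<bar>t - tp\<bar> \<and> \<bar>x - L\<bar> \<le> \<bar>t - tq\<bar>"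
    if "t \<in> {0..l}" "x \<in> {L - l..L}" "\<alpha> t = circle_point L (x0 + \<sigma> * x)" for t x
    using lip[OF that(1) tp(1)] lip[OF that(1) tq(1)] dist_arc[OF that(2), of "L - l"]
      dist_arc[OF that(2), of L] that(3) tp tq l by simp
  have param: "\<exists>x\<in>{L - l..L}. \<alpha> t = circle_point L (x0 + \<sigma> * x)" if "t \<in> {0..l}" for t
    using img that by blast
  from ends show ?thesis
  proof
    assume "tp = 0 \<and> tq = l"
    then have "\<alpha> t = circle_point L (x0 + \<sigma> * (L - l + t))" if "t \<in> {0..l}" for t
      using param[OF that] on_arc[OF that] that by (smt (verit, best) atLeastAtMost_iff)
    then show ?thesis by blast
  next
    assume "tp = l \<and> tq = 0"
    then have "\<alpha> t = circle_point L (x0 + \<sigma> * (L - t))" if "t \<in> {0..l}" for t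
      using param[OF that] on_arc[OF that] that by (smt (verit, best) atLeastAtMost_iff)
    then show ?thesis by blast
  qed
qed

end

section \<open>Monotone short lifts\<close>

(* lifts of the monotone 1-Lipschitz degree-one maps from the circle of length L to the circle
   of length L' *)
definition short_lift :: "real \<Rightarrow> real \<Rightarrow> (real \<Rightarrow> real) \<Rightarrow> bool" where
  "short_lift L L' G \<longleftrightarrow>
     (\<forall>x y. x \<le> y \<longrightarrow> G x \<le> G y \<and> G y - G x \<le> y - x) \<and> (\<forall>x. G (x + L) = G x + L')"

lemma short_lift_increment:
  "short_lift L L' G \<Longrightarrow> x \<le> y \<Longrightarrow> 0 \<le> G y - G x \<and> G y - G x \<le> y - x"
  unfolding short_lift_def by auto

lemma short_lift_add_period: "short_lift L L' G \<Longrightarrow> G (x + L) = G x + L'"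
  unfolding short_lift_def by auto

lemma short_lift_diff_period: "short_lift L L' G \<Longrightarrow> G (x - L) = G x - L'"
  using short_lift_add_period[of L L' G "x - L"] by simp

lemma short_lift_id: "short_lift L L id"
  unfolding short_lift_def by auto

lemma short_lift_comp:
  assumes F: "short_lift L1 L2 F" and G: "short_lift L2 L3 G"
  shows "short_lift L1 L3 (G \<circ> F)"
proof -
  have "G (F x) \<le> G (F y) \<and> G (F y) - G (F x) \<le> y - x" if "x \<le> y" for x y
    using short_lift_increment[OF F that] short_lift_increment[OF G, of "F x" "F y"] by auto
  then show ?thesis
    unfolding short_lift_def by (simp add: short_lift_add_period[OF F] short_lift_add_period[OF G])
qed

lemma short_lift_reflect_translate:
  assumes G: "short_lift L L' G" and \<tau>: "\<tau> \<in> {1, -1}"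
  shows "short_lift L L' (\<lambda>y. c + \<tau> * G (\<tau> * y + b))"
proof (cases "\<tau> = 1")
  case True
  have "G (x + b) \<le> G (y + b) \<and> G (y + b) - G (x + b) \<le> y - x" if "x \<le> y" for x y
    using short_lift_increment[OF G, of "x + b" "y + b"] that by auto
  moreover have "G (x + L + b) = G (x + b) + L'" for x
    using short_lift_add_period[OF G, of "x + b"] by (simp add: algebra_simps)
  ultimately show ?thesis unfolding short_lift_def True by simp
next
  case False
  then have "\<tau> = -1" using \<tau> by simp
  have "G (- y + b) \<le> G (- x + b) \<and> G (- x + b) - G (- y + b) \<le> y - x" if "x \<le> y" for x y
    using short_lift_increment[OF G, of "- y + b" "- x + b"] that by auto
  moreover have "G (- (x + L) + b) = G (- x + b) - L'" for x
    using short_lift_diff_period[OF G, of "- x + b"] by (simp add: algebra_simps)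
  ultimately show ?thesis unfolding short_lift_def \<open>\<tau> = -1\<close> by simp
qed

definition lift_extension :: "real \<Rightarrow> real \<Rightarrow> (real \<Rightarrow> real) \<Rightarrow> real \<Rightarrow> real" where
  "lift_extension L L' g x = of_int \<lfloor>x / L\<rfloor> * L' + g (x - of_int \<lfloor>x / L\<rfloor> * L)"

lemma lift_extension_decomposition:
  assumes "0 < L"
  obtains k y where "y \<in> {0..<L}" "x = y + of_int k * L" "lift_extension L L' g x = g y + of_int k * L'"
  by (rule that[of "x - of_int \<lfloor>x / L\<rfloor> * L" "\<lfloor>x / L\<rfloor>"])
    (use floor_divide_mult_bounds[OF assms, of x] in \<open>auto simp: lift_extension_def\<close>)

lemma short_lift_lift_extension:
  assumes L: "0 < L"
    and g: "\<And>x y. 0 \<le> x \<Longrightarrow> x \<le> y \<Longrightarrow> y \<le> L \<Longrightarrow> g x \<le> g y \<and> g y - g x \<le> y - x"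
    and g0: "g 0 = 0" and gL: "g L = L'"
  shows "short_lift L L' (lift_extension L L' g)"
proof -
  have L': "0 \<le> L'" "L' \<le> L" using g[of 0 L] g0 gL L by auto
  have "lift_extension L L' g x \<le> lift_extension L L' g y \<and>
      lift_extension L L' g y - lift_extension L L' g x \<le> y - x" if "x \<le> y" for x y
  proof -
    obtain kx x' where x': "x' \<in> {0..<L}" "x = x' + of_int kx * L"
      "lift_extension L L' g x = g x' + of_int kx * L'"
      using lift_extension_decomposition[OF L] .
    obtain ky y' where y': "y' \<in> {0..<L}" "y = y' + of_int ky * L"
      "lift_extension L L' g y = g y' + of_int ky * L'"
      using lift_extension_decomposition[OF L] .
    have "of_int kx * L < of_int (ky + 1) * L" using \<open>x \<le> y\<close> x' y' by (simp add: algebra_simps)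
    then have "kx \<le> ky" using L by (simp add: mult_less_cancel_right)
    show ?thesis
    proof (cases "kx = ky")
      case True
      then show ?thesis using g[of x' y'] x' y' \<open>x \<le> y\<close> by auto
    next
      case False
      then have k: "1 \<le> of_int ky - (of_int kx :: real)" using \<open>kx \<le> ky\<close> by linarith
      have "g x' \<le> L'" "L' - g x' \<le> L - x'" "0 \<le> g y'" "g y' \<le> y'"
        using g[of x' L] g[of 0 y'] x' y' gL g0 by auto
      moreover have "(of_int ky - of_int kx - 1) * L' \<le> (of_int ky - of_int kx - 1) * L"
        "0 \<le> (of_int ky - of_int kx - 1) * L'"
        using k L' by (auto intro: mult_left_mono)
      ultimately show ?thesis using x' y' by (simp add: algebra_simps)
    qed
  qed
  moreover have "lift_extension L L' g (x + L) = lift_extension L L' g x + L'" for x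
  proof -
    have "(x + L) / L = x / L + 1" using L by (simp add: field_simps)
    then have "\<lfloor>(x + L) / L\<rfloor> = \<lfloor>x / L\<rfloor> + 1" by simp
    then show ?thesis unfolding lift_extension_def by (simp add: algebra_simps)
  qed
  ultimately show ?thesis unfolding short_lift_def by blast
qed

section \<open>Lifting the tightening maps\<close>

lemma circle_point_shift_eq_imp_period:
  assumes L: "0 < L" and "0 < a" "a \<le> L" "\<sigma> \<in> {1, -1}"
    and "circle_point L (x + \<sigma> * a) = circle_point L x"
  shows "a = L"
proof (rule ccontr)
  assume "a \<noteq> L"
  then have "\<bar>(x + \<sigma> * a) - x\<bar> < L" using assms(2-4) by auto
  then have "x + \<sigma> * a = x" using circle_point_inj[OF L assms(5)] by blast
  then show False using assms(2,4) by auto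
qed

lemma tightening_arc_orientations:
  fixes pr :: "complex \<Rightarrow> complex" and \<alpha> \<beta> :: "real \<Rightarrow> complex"
  assumes L: "0 < L" and L': "0 < L'" and a: "0 < a" "a \<le> L'" "L' < L"
    and s1: "s1 \<in> {1, -1}" and s2: "s2 \<in> {1, -1}"
    and start: "pr (circle_point L xi) = circle_point L' xp"
    and mid: "pr (circle_point L (xi + s1 * a)) = circle_point L' (xp + s2 * a)"
    and \<alpha>: "(\<forall>t\<in>{0..L - a}. \<alpha> t = circle_point L (xi + s1 * (a + t)))
      \<or> (\<forall>t\<in>{0..L - a}. \<alpha> t = circle_point L (xi + s1 * (L - t)))"
    and \<beta>: "(\<forall>u\<in>{0..L' - a}. \<beta> u = circle_point L' (xp + s2 * (a + u)))
      \<or> (\<forall>u\<in>{0..L' - a}. \<beta> u = circle_point L' (xp + s2 * (L' - u)))"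
    and pr_\<alpha>_0: "pr (\<alpha> 0) = \<beta> 0"
  obtains (forward) "\<forall>t\<in>{0..L - a}. \<alpha> t = circle_point L (xi + s1 * (a + t))"
      "\<forall>u\<in>{0..L' - a}. \<beta> u = circle_point L' (xp + s2 * (a + u))"
    | (backward) "\<forall>t\<in>{0..L - a}. \<alpha> t = circle_point L (xi + s1 * (L - t))"
      "\<forall>u\<in>{0..L' - a}. \<beta> u = circle_point L' (xp + s2 * (L' - u))"
    | (collapsed) "L' = a"
proof -
  \<comment> \<open>with opposite orientations the two ends of phi(P) coincide, so Qbar is a point\<close>
  have collapse: "L' = a" if "circle_point L' (xp + s2 * a) = circle_point L' xp"
    using circle_point_shift_eq_imp_period[OF L' a(1,2) s2 that] by simp
  have ends: "circle_point L (xi + s1 * L) = circle_point L xi"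
    "circle_point L' (xp + s2 * L') = circle_point L' xp"
    using circle_point_add_sign_period[OF L s1] circle_point_add_sign_period[OF L' s2] by auto
  have "0 \<in> {0..L - a}" "0 \<in> {0..L' - a}" using a by auto
  from \<alpha> show ?thesis
  proof (elim disjE)
    assume \<alpha>f: "\<forall>t\<in>{0..L - a}. \<alpha> t = circle_point L (xi + s1 * (a + t))"
    from \<beta> show ?thesis
    proof (elim disjE)
      assume "\<forall>u\<in>{0..L' - a}. \<beta> u = circle_point L' (xp + s2 * (L' - u))"
      then have "\<beta> 0 = circle_point L' xp" using \<open>0 \<in> {0..L' - a}\<close> ends by auto
      moreover have "\<alpha> 0 = circle_point L (xi + s1 * a)" using \<alpha>f \<open>0 \<in> {0..L - a}\<close> by auto
      ultimately show ?thesis using pr_\<alpha>_0 mid collapse collapsed by simp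
    qed (use \<alpha>f forward in blast)
  next
    assume \<alpha>b: "\<forall>t\<in>{0..L - a}. \<alpha> t = circle_point L (xi + s1 * (L - t))"
    from \<beta> show ?thesis
    proof (elim disjE)
      assume "\<forall>u\<in>{0..L' - a}. \<beta> u = circle_point L' (xp + s2 * (a + u))"
      then have "\<beta> 0 = circle_point L' (xp + s2 * a)" using \<open>0 \<in> {0..L' - a}\<close> by auto
      moreover have "\<alpha> 0 = circle_point L xi" using \<alpha>b \<open>0 \<in> {0..L - a}\<close> ends by auto
      ultimately show ?thesis using pr_\<alpha>_0 start collapse collapsed by simp
    qed (use \<alpha>b backward in blast)
  qed
qed

lemma tightening_map_on_arc:
  fixes pr :: "complex \<Rightarrow> complex" and \<alpha> \<beta> :: "real \<Rightarrow> complex"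
  assumes L: "0 < L" and L': "0 < L'" and a: "0 < a" "a \<le> L'" "L' < L"
    and s1: "s1 \<in> {1, -1}" and s2: "s2 \<in> {1, -1}"
    and start: "pr (circle_point L xi) = circle_point L' xp"
    and mid: "pr (circle_point L (xi + s1 * a)) = circle_point L' (xp + s2 * a)"
    and \<alpha>: "(\<forall>t\<in>{0..L - a}. \<alpha> t = circle_point L (xi + s1 * (a + t)))
      \<or> (\<forall>t\<in>{0..L - a}. \<alpha> t = circle_point L (xi + s1 * (L - t)))"
    and \<beta>: "(\<forall>u\<in>{0..L' - a}. \<beta> u = circle_point L' (xp + s2 * (a + u)))
      \<or> (\<forall>u\<in>{0..L' - a}. \<beta> u = circle_point L' (xp + s2 * (L' - u)))"
    and pr_\<alpha>: "\<forall>t\<in>{0..L - a}. pr (\<alpha> t) = \<beta> (t * (L' - a) / (L - a))"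
    and s: "s \<in> {0..L - a}"
  shows "pr (circle_point L (xi + s1 * (a + s))) = circle_point L' (xp + s2 * (a + s * (L' - a) / (L - a)))"
proof -
  define \<rho> where "\<rho> = (L' - a) / (L - a)"
  have \<rho>: "0 \<le> \<rho>" "\<rho> \<le> 1" "(L - a) * \<rho> = L' - a" using a unfolding \<rho>_def by (auto simp: field_simps)
  have scaled: "t * \<rho> \<in> {0..L' - a}" if "t \<in> {0..L - a}" for t
    using that \<rho> mult_right_mono[of t "L - a" \<rho>] by auto
  have pr_\<alpha>_0: "pr (\<alpha> 0) = \<beta> 0" using pr_\<alpha> a by force
  show ?thesis
  proof (rule tightening_arc_orientations[OF L L' a s1 s2 start mid \<alpha> \<beta> pr_\<alpha>_0])
    assume "\<forall>t\<in>{0..L - a}. \<alpha> t = circle_point L (xi + s1 * (a + t))"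
      "\<forall>u\<in>{0..L' - a}. \<beta> u = circle_point L' (xp + s2 * (a + u))"
    then show ?thesis using pr_\<alpha> s scaled[OF s] unfolding \<rho>_def by auto
  next
    assume backward: "\<forall>t\<in>{0..L - a}. \<alpha> t = circle_point L (xi + s1 * (L - t))"
      "\<forall>u\<in>{0..L' - a}. \<beta> u = circle_point L' (xp + s2 * (L' - u))"
    define t where "t = L - a - s"
    have t: "t \<in> {0..L - a}" using s unfolding t_def by auto
    have "circle_point L (xi + s1 * (a + s)) = \<alpha> t" using backward t by (simp add: t_def)
    then have "pr (circle_point L (xi + s1 * (a + s))) = \<beta> (t * \<rho>)"
      using pr_\<alpha> t unfolding \<rho>_def by simp
    also have "\<dots> = circle_point L' (xp + s2 * (L' - t * \<rho>))" using backward scaled[OF t] by blast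
    also have "L' - t * \<rho> = a + s * \<rho>" using \<rho>(3) unfolding t_def by (simp add: algebra_simps)
    finally show ?thesis unfolding \<rho>_def by simp
  next
    assume collapsed: "L' = a"
    then have "\<beta> 0 = circle_point L' (xp + s2 * a)"
      using \<beta> circle_point_add_sign_period[OF L' s2, of xp] by auto
    moreover have "\<exists>t\<in>{0..L - a}. \<alpha> t = circle_point L (xi + s1 * (a + s))"
      using \<alpha>
    proof (elim disjE)
      assume "\<forall>t\<in>{0..L - a}. \<alpha> t = circle_point L (xi + s1 * (L - t))"
      then show ?thesis using s by (intro bexI[of _ "L - a - s"]) auto
    qed (use s in blast)
    ultimately show ?thesis using pr_\<alpha> collapsed by auto
  qed
qed

lemma circle_map_lift_extension:
  assumes L: "0 < L" and L': "0 < L'" and s1: "s1 \<in> {1, -1}" and s2: "s2 \<in> {1, -1}"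
    and on_period: "\<And>x. x \<in> {0..<L} \<Longrightarrow> f (circle_point L (xi + s1 * x)) = circle_point L' (xp + s2 * g x)"
  shows "f (circle_point L (xi + s1 * x)) = circle_point L' (xp + s2 * lift_extension L L' g x)"
proof -
  obtain k y where ky: "y \<in> {0..<L}" "x = y + of_int k * L" "lift_extension L L' g x = g y + of_int k * L'"
    using lift_extension_decomposition[OF L] .
  have "circle_point L (xi + s1 * x) = circle_point L ((xi + s1 * y) + s1 * (of_int k * L))"
    using ky by (simp add: algebra_simps)
  also have "\<dots> = circle_point L (xi + s1 * y)" by (rule circle_point_add_sign_int_mult[OF L s1])
  finally have "f (circle_point L (xi + s1 * x)) = circle_point L' (xp + s2 * g y)"
    using on_period[OF ky(1)] by simp
  also have "\<dots> = circle_point L' ((xp + s2 * g y) + s2 * (of_int k * L'))"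
    by (rule circle_point_add_sign_int_mult[OF L' s2, symmetric])
  also have "\<dots> = circle_point L' (xp + s2 * lift_extension L L' g x)"
    using ky by (simp add: algebra_simps)
  finally show ?thesis .
qed

lemma circle_map_lift_reorient:
  assumes G0: "short_lift L L' G0" and s1: "s1 \<in> {1, -1}" and s2: "s2 \<in> {1, -1}"
    and f: "\<And>x. f (circle_point L (xi + s1 * x)) = circle_point L' (xp + s2 * G0 x)"
    and \<sigma>: "\<sigma> \<in> {1, -1}"
  obtains \<sigma>' G where "\<sigma>' \<in> {1, -1}" "short_lift L L' G"
    "\<And>y. f (circle_point L (\<sigma> * y)) = circle_point L' (\<sigma>' * G y)"
proof -
  define \<tau> where "\<tau> = s1 * \<sigma>"
  have \<tau>: "\<tau> \<in> {1, -1}" using s1 \<sigma> unfolding \<tau>_def by auto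
  define G where "G y = \<tau> * s2 * xp + \<tau> * G0 (\<tau> * y + - s1 * xi)" for y
  show ?thesis
  proof (rule that)
    show "s2 * \<tau> \<in> {1, -1}" using s2 \<tau> by auto
    show "short_lift L L' G"
      unfolding G_def[abs_def] by (rule short_lift_reflect_translate[OF G0 \<tau>])
    fix y
    have "\<sigma> * y = xi + s1 * (\<tau> * y + - s1 * xi)" using s1 \<sigma> unfolding \<tau>_def by (auto simp: algebra_simps)
    then have "f (circle_point L (\<sigma> * y)) = circle_point L' (xp + s2 * G0 (\<tau> * y + - s1 * xi))"
      using f by metis
    also have "xp + s2 * G0 (\<tau> * y + - s1 * xi) = s2 * \<tau> * G y"
      using s2 \<tau> unfolding G_def by (auto simp: algebra_simps)
    finally show "f (circle_point L (\<sigma> * y)) = circle_point L' (s2 * \<tau> * G y)" .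
  qed
qed

lemma min_short:
  fixes x y u v :: real
  assumes "x \<le> y" "u \<le> v" "v - u \<le> y - x"
  shows "min x u \<le> min y v \<and> min y v - min x u \<le> y - x"
  using assms by (auto simp: min_def)

(* the lift of pi_i on one period: the identity on P_i = [0, A], then the affine
   contraction of Q_i = [A, L] onto Qbar_i = [A, L'] *)
definition tightening_profile :: "real \<Rightarrow> real \<Rightarrow> real \<Rightarrow> real \<Rightarrow> real" where
  "tightening_profile L L' A x = min x (A + (x - A) * ((L' - A) / (L - A)))"

context
  fixes L L' A :: real
  assumes A: "0 \<le> A" "A \<le> L'" "L' < L"
begin

lemma tightening_profile_slope: "0 \<le> (L' - A) / (L - A)" "(L' - A) / (L - A) \<le> 1"
  using A by auto

lemma tightening_profile_below:
  assumes "x \<le> A"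
  shows "tightening_profile L L' A x = x"
proof -
  define \<rho> where "\<rho> = (L' - A) / (L - A)"
  have "(A - x) * \<rho> \<le> A - x"
    using mult_left_mono[OF tightening_profile_slope(2), of "A - x"] assms unfolding \<rho>_def by simp
  then show ?thesis unfolding tightening_profile_def \<rho>_def[symmetric] by (simp add: algebra_simps)
qed

lemma tightening_profile_above:
  assumes "A \<le> x"
  shows "tightening_profile L L' A x = A + (x - A) * ((L' - A) / (L - A))"
proof -
  define \<rho> where "\<rho> = (L' - A) / (L - A)"
  have "(x - A) * \<rho> \<le> x - A"
    using mult_left_mono[OF tightening_profile_slope(2), of "x - A"] assms unfolding \<rho>_def by simp
  then show ?thesis unfolding tightening_profile_def \<rho>_def[symmetric] by (simp add: algebra_simps)
qed

lemma tightening_profile_short: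
  assumes "x \<le> y"
  shows "tightening_profile L L' A x \<le> tightening_profile L L' A y \<and>
    tightening_profile L L' A y - tightening_profile L L' A x \<le> y - x"
proof -
  define \<rho> where "\<rho> = (L' - A) / (L - A)"
  have \<rho>: "0 \<le> \<rho>" "\<rho> \<le> 1" using tightening_profile_slope unfolding \<rho>_def by auto
  have "(x - A) * \<rho> \<le> (y - A) * \<rho>" using assms \<rho> by (intro mult_right_mono) auto
  moreover have "(y - x) * \<rho> \<le> (y - x) * 1" using assms \<rho> by (intro mult_left_mono) auto
  then have "(y - A) * \<rho> - (x - A) * \<rho> \<le> y - x" by (simp add: algebra_simps)
  ultimately show ?thesis unfolding tightening_profile_def \<rho>_def[symmetric]
    using min_short[OF assms, of "A + (x - A) * \<rho>" "A + (y - A) * \<rho>"] by simp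
qed

lemma short_lift_tightening_profile: "short_lift L L' (lift_extension L L' (tightening_profile L L' A))"
  using A by (intro short_lift_lift_extension tightening_profile_short)
    (auto simp: tightening_profile_below tightening_profile_above)

end

lemma arc_and_complement_parametrization:
  assumes L: "0 < L" and A: "0 < A" "L / 2 \<le> A" "A \<le> L"
    and \<iota>: "unit_speed_path L {0..A} \<iota>" "inj_on \<iota> {0<..<A}"
    and \<alpha>: "unit_speed_path L {0..L - A} \<alpha>" "\<alpha> ` {0..L - A} = rcircle L - \<iota> ` {0<..<A}"
  obtains x0 \<sigma> where "\<sigma> \<in> {1, -1}" "\<forall>t\<in>{0..A}. \<iota> t = circle_point L (x0 + \<sigma> * t)"
    "(\<forall>t\<in>{0..L - A}. \<alpha> t = circle_point L (x0 + \<sigma> * (A + t)))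
      \<or> (\<forall>t\<in>{0..L - A}. \<alpha> t = circle_point L (x0 + \<sigma> * (L - t)))"
proof -
  obtain x0 \<sigma> where \<sigma>: "\<sigma> \<in> {1, -1}"
    and \<iota>_eq: "\<And>t. t \<in> {0..A} \<Longrightarrow> \<iota> t = circle_point L (x0 + \<sigma> * t)"
    using unit_speed_path_injective_eq_arc[OF L A(1) \<iota>] by metis
  have \<iota>_img: "\<iota> ` {0<..<A} = (\<lambda>t. circle_point L (x0 + \<sigma> * t)) ` {0<..<A}"
    using \<iota>_eq by (intro image_cong) auto
  have "\<alpha> ` {0..L - A} = (\<lambda>x. circle_point L (x0 + \<sigma> * x)) ` {A..L}"
    unfolding \<alpha>(2) \<iota>_img rcircle_diff_open_arc[OF L A(1,3) \<sigma>] ..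
  then have "\<alpha> ` {0..L - A} = (\<lambda>x. circle_point L (x0 + \<sigma> * x)) ` {L - (L - A)..L}" by simp
  then have "(\<forall>t\<in>{0..L - A}. \<alpha> t = circle_point L (x0 + \<sigma> * (L - (L - A) + t)))
      \<or> (\<forall>t\<in>{0..L - A}. \<alpha> t = circle_point L (x0 + \<sigma> * (L - t)))"
    using A by (intro unit_speed_path_onto_arc[OF L _ _ \<sigma> \<alpha>(1)]) auto
  then show ?thesis using that[of \<sigma> x0] \<sigma> \<iota>_eq by auto
qed

lemma tight_step_on_period:
  assumes step: "tightening_step L tight a io ph pr i" and tight: "tight i"
    and L: "0 < L i" "0 < L (Suc i)" "L i \<le> L 0"
  obtains xi xp s1 s2 where "s1 \<in> {1, -1}" "s2 \<in> {1, -1}"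
    "\<And>x. x \<in> {0..<L i} \<Longrightarrow> pr i (circle_point (L i) (xi + s1 * x))
      = circle_point (L (Suc i)) (xp + s2 * tightening_profile (L i) (L (Suc i)) (a i) x)"
proof -
  from step tight obtain \<alpha> \<beta> where
    A: "0 < a i" "L 0 / 2 \<le> a i" "L (Suc i) < L i" "a i \<le> L (Suc i)"
    and io: "unit_speed_path (L i) {0..a i} (io i)" "inj_on (io i) {0..a i}"
    and ph: "unit_speed_path (L (Suc i)) {0..a i} (ph i)" "inj_on (ph i) {0<..<a i}"
    and \<alpha>: "unit_speed_path (L i) {0..L i - a i} \<alpha>" "\<alpha> ` {0..L i - a i} = rcircle (L i) - io i ` {0<..<a i}"
    and \<beta>: "unit_speed_path (L (Suc i)) {0..L (Suc i) - a i} \<beta>"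
      "\<beta> ` {0..L (Suc i) - a i} = rcircle (L (Suc i)) - ph i ` {0<..<a i}"
    and pr_io: "\<forall>t\<in>{0..a i}. pr i (io i t) = ph i t"
    and pr_\<alpha>: "\<forall>t\<in>{0..L i - a i}. pr i (\<alpha> t) = \<beta> (t * (L (Suc i) - a i) / (L i - a i))"
    unfolding tightening_step_def Qlen_def Qbarlen_def Qset_def Qbarset_def by auto
  have half: "L i / 2 \<le> a i" "L (Suc i) / 2 \<le> a i" "a i \<le> L i" using A L(3) by auto
  have inj: "inj_on (io i) {0<..<a i}" using io(2) by (rule inj_on_subset) auto
  obtain xi s1 where s1: "s1 \<in> {1, -1}"
    and io_eq: "\<forall>t\<in>{0..a i}. io i t = circle_point (L i) (xi + s1 * t)"
    and \<alpha>_eq: "(\<forall>t\<in>{0..L i - a i}. \<alpha> t = circle_point (L i) (xi + s1 * (a i + t)))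
      \<or> (\<forall>t\<in>{0..L i - a i}. \<alpha> t = circle_point (L i) (xi + s1 * (L i - t)))"
    by (rule arc_and_complement_parametrization[OF L(1) A(1) half(1,3) io(1) inj \<alpha>])
  obtain xp s2 where s2: "s2 \<in> {1, -1}"
    and ph_eq: "\<forall>t\<in>{0..a i}. ph i t = circle_point (L (Suc i)) (xp + s2 * t)"
    and \<beta>_eq: "(\<forall>t\<in>{0..L (Suc i) - a i}. \<beta> t = circle_point (L (Suc i)) (xp + s2 * (a i + t)))
      \<or> (\<forall>t\<in>{0..L (Suc i) - a i}. \<beta> t = circle_point (L (Suc i)) (xp + s2 * (L (Suc i) - t)))"
    by (rule arc_and_complement_parametrization[OF L(2) A(1) half(2) A(4) ph \<beta>])
  have P: "pr i (circle_point (L i) (xi + s1 * t)) = circle_point (L (Suc i)) (xp + s2 * t)"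
    if "t \<in> {0..a i}" for t
    using pr_io io_eq ph_eq that by auto
  have "pr i (circle_point (L i) (xi + s1 * x))
      = circle_point (L (Suc i)) (xp + s2 * tightening_profile (L i) (L (Suc i)) (a i) x)"
    if "x \<in> {0..<L i}" for x
  proof (cases "x \<le> a i")
    case True
    then show ?thesis using P that A by (simp add: tightening_profile_below)
  next
    case False
    have "pr i (circle_point (L i) (xi + s1 * (a i + (x - a i))))
        = circle_point (L (Suc i)) (xp + s2 * (a i + (x - a i) * (L (Suc i) - a i) / (L i - a i)))"
      using False that A P[of 0] P[of "a i"]
      by (intro tightening_map_on_arc[OF L(1,2) A(1,4,3) s1 s2 _ _ \<alpha>_eq \<beta>_eq pr_\<alpha>]) auto
    then show ?thesis using False A by (simp add: tightening_profile_above)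
  qed
  then show ?thesis using that[OF s1 s2] by blast
qed

lemma tight_step_lift:
  assumes step: "tightening_step L tight a io ph pr i" and tight: "tight i"
    and L: "0 < L i" "0 < L (Suc i)" "L i \<le> L 0"
  obtains xi xp s1 s2 G where "s1 \<in> {1, -1}" "s2 \<in> {1, -1}" "short_lift (L i) (L (Suc i)) G"
    "\<And>x. pr i (circle_point (L i) (xi + s1 * x)) = circle_point (L (Suc i)) (xp + s2 * G x)"
proof (rule tight_step_on_period[OF step tight L])
  let ?G = "lift_extension (L i) (L (Suc i)) (tightening_profile (L i) (L (Suc i)) (a i))"
  fix xi xp s1 s2 assume s: "s1 \<in> {1, -1}" "s2 \<in> {1, -1}"
    and on_period: "\<And>x. x \<in> {0..<L i} \<Longrightarrow> pr i (circle_point (L i) (xi + s1 * x))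
      = circle_point (L (Suc i)) (xp + s2 * tightening_profile (L i) (L (Suc i)) (a i) x)"
  have "0 \<le> a i" "a i \<le> L (Suc i)" "L (Suc i) < L i"
    using step tight unfolding tightening_step_def Qbarlen_def by auto
  then have "short_lift (L i) (L (Suc i)) ?G" by (rule short_lift_tightening_profile)
  moreover have "pr i (circle_point (L i) (xi + s1 * x)) = circle_point (L (Suc i)) (xp + s2 * ?G x)" for x
    using on_period by (rule circle_map_lift_extension[OF L(1,2) s])
  ultimately show ?thesis using that[OF s] by blast
qed

lemma tightening_step_lift:
  assumes step: "tightening_step L tight a io ph pr i"
    and L: "0 < L i" "0 < L (Suc i)" "L i \<le> L 0" and \<sigma>: "\<sigma> \<in> {1, -1}"
  obtains \<sigma>' G where "\<sigma>' \<in> {1, -1}" "short_lift (L i) (L (Suc i)) G"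
    "\<And>y. pr i (circle_point (L i) (\<sigma> * y)) = circle_point (L (Suc i)) (\<sigma>' * G y)"
proof (cases "tight i")
  case True
  obtain xi xp s1 s2 G where s: "s1 \<in> {1, -1}" "s2 \<in> {1, -1}" and G: "short_lift (L i) (L (Suc i)) G"
    and lift: "\<And>x. pr i (circle_point (L i) (xi + s1 * x)) = circle_point (L (Suc i)) (xp + s2 * G x)"
    using tight_step_lift[OF step True L] by metis
  show ?thesis by (rule circle_map_lift_reorient[OF G s lift \<sigma> that])
next
  case False
  then have "L (Suc i) = L i" "\<forall>z\<in>rcircle (L i). pr i z = z"
    using step unfolding tightening_step_def by auto
  then show ?thesis using that[OF \<sigma>, of id] short_lift_id circle_point_in_rcircle[OF L(1)] by simp
qed

lemma tightening_seq_lengths: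
  assumes seq: "tightening_seq L tight a io ph pr"
  shows "decseq L" "L 0 / 2 \<le> L i" "0 < L i"
proof -
  have step: "tightening_step L tight a io ph pr i" for i
    using seq unfolding tightening_seq_def by auto
  have dec: "L (Suc i) \<le> L i" and half: "L 0 / 2 \<le> L (Suc i) \<or> L (Suc i) = L i" for i
    using step[of i] unfolding tightening_step_def Qbarlen_def by (auto split: if_splits)
  show "decseq L" using dec by (simp add: decseq_Suc_iff)
  show "L 0 / 2 \<le> L i"
  proof (induction i)
    case 0
    then show ?case using seq unfolding tightening_seq_def by (simp add: field_simps)
  next
    case (Suc i)
    then show ?case using half[of i] by auto
  qed
  show "0 < L i" using seq unfolding tightening_seq_def by auto
qed

lemma tightening_seq_length_limit:
  assumes seq: "tightening_seq L tight a io ph pr"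
  obtains Linf where "L \<longlonglongrightarrow> Linf" "L 0 / 2 \<le> Linf"
proof -
  have "\<forall>i. 0 \<le> L i" using tightening_seq_lengths(3)[OF seq] less_imp_le by blast
  then obtain Linf where Linf: "L \<longlonglongrightarrow> Linf"
    using decseq_convergent[OF tightening_seq_lengths(1)[OF seq]] by blast
  moreover have "L 0 / 2 \<le> Linf"
    by (rule LIMSEQ_le_const[OF Linf]) (use tightening_seq_lengths(2)[OF seq] in auto)
  ultimately show ?thesis using that by blast
qed

lemma tightening_seq_lifts:
  assumes seq: "tightening_seq L tight a io ph pr"
  obtains \<sigma> F where "\<And>i. \<sigma> i \<in> {1, -1}" "\<And>i. short_lift (L 0) (L i) (F i)"
    "\<And>i x. pic pr i (circle_point (L 0) x) = circle_point (L i) (\<sigma> i * F i x)"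
    "\<And>i x y. x \<le> y \<Longrightarrow> F (Suc i) y - F (Suc i) x \<le> F i y - F i x"
proof -
  define P where "P i \<sigma>F \<longleftrightarrow> fst \<sigma>F \<in> {1, -1} \<and> short_lift (L 0) (L i) (snd \<sigma>F) \<and>
    (\<forall>x. pic pr i (circle_point (L 0) x) = circle_point (L i) (fst \<sigma>F * snd \<sigma>F x))"
    for i and \<sigma>F :: "real \<times> (real \<Rightarrow> real)"
  define Q where
    "Q i \<sigma>F \<sigma>F' \<longleftrightarrow> (\<forall>x y. x \<le> y \<longrightarrow> snd \<sigma>F' y - snd \<sigma>F' x \<le> snd \<sigma>F y - snd \<sigma>F x)"
    for i :: nat and \<sigma>F \<sigma>F' :: "real \<times> (real \<Rightarrow> real)"
  have step: "tightening_step L tight a io ph pr i" for i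
    using seq unfolding tightening_seq_def by auto
  have L: "0 < L i" "L i \<le> L 0" for i
    using tightening_seq_lengths[OF seq] by (auto simp: decseq_def)
  have "P 0 (1, id)" unfolding P_def by (simp add: short_lift_id)
  moreover have "\<exists>\<sigma>F'. P (Suc i) \<sigma>F' \<and> Q i \<sigma>F \<sigma>F'" if "P i \<sigma>F" for i \<sigma>F
  proof -
    obtain \<sigma> F where \<sigma>F: "\<sigma>F = (\<sigma>, F)" by fastforce
    with that have \<sigma>: "\<sigma> \<in> {1, -1}" and F: "short_lift (L 0) (L i) F"
      and lift: "\<And>x. pic pr i (circle_point (L 0) x) = circle_point (L i) (\<sigma> * F x)"
      unfolding P_def by auto
    obtain \<sigma>' G where "\<sigma>' \<in> {1, -1}" and G: "short_lift (L i) (L (Suc i)) G"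
      and "\<And>y. pr i (circle_point (L i) (\<sigma> * y)) = circle_point (L (Suc i)) (\<sigma>' * G y)"
      using tightening_step_lift[OF step L(1) L(1)[of "Suc i"] L(2) \<sigma>] by metis
    then have "P (Suc i) (\<sigma>', G \<circ> F)"
      unfolding P_def using short_lift_comp[OF F G] lift by simp
    moreover have "Q i \<sigma>F (\<sigma>', G \<circ> F)"
      unfolding Q_def \<sigma>F using short_lift_increment[OF F] short_lift_increment[OF G] by fastforce
    ultimately show ?thesis by blast
  qed
  ultimately obtain \<sigma>F where "\<And>i. P i (\<sigma>F i) \<and> Q i (\<sigma>F i) (\<sigma>F (Suc i))"
    using dependent_nat_choice[of P Q] by blast
  then show ?thesis
    using that[of "\<lambda>i. fst (\<sigma>F i)" "\<lambda>i. snd (\<sigma>F i)"] unfolding P_def Q_def by blast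
qed

section \<open>The limit circle\<close>

lemma short_lifts_limit:
  assumes F: "\<And>i. short_lift L0 (L i) (F i)"
    and dec: "\<And>i x y. x \<le> y \<Longrightarrow> F (Suc i) y - F (Suc i) x \<le> F i y - F i x"
    and L: "L \<longlonglongrightarrow> Linf"
  obtains \<Phi> where "short_lift L0 Linf \<Phi>" "\<And>x y. (\<lambda>i. F i y - F i x) \<longlonglongrightarrow> \<Phi> y - \<Phi> x"
proof -
  have increment_convergent: "convergent (\<lambda>i. F i y - F i x)" if "x \<le> y" for x y
  proof -
    have "decseq (\<lambda>i. F i y - F i x)" using dec[OF that] by (simp add: decseq_Suc_iff)
    moreover have "\<forall>i. 0 \<le> F i y - F i x" using short_lift_increment[OF F that] by simp
    ultimately obtain l where "(\<lambda>i. F i y - F i x) \<longlonglongrightarrow> l" by (rule decseq_convergent)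
    then show ?thesis unfolding convergent_def ..
  qed
  have "convergent (\<lambda>i. F i x - F i 0)" for x
  proof (cases "0 \<le> x")
    case False
    then show ?thesis
      using increment_convergent[of x 0] convergent_minus_iff[of "\<lambda>i. F i 0 - F i x"] by simp
  qed (rule increment_convergent)
  then obtain \<Phi> where \<Phi>: "\<And>x. (\<lambda>i. F i x - F i 0) \<longlonglongrightarrow> \<Phi> x"
    unfolding convergent_def by metis
  have increment: "(\<lambda>i. F i y - F i x) \<longlonglongrightarrow> \<Phi> y - \<Phi> x" for x y
    using tendsto_diff[OF \<Phi>[of y] \<Phi>[of x]] by simp
  have "\<Phi> x \<le> \<Phi> y \<and> \<Phi> y - \<Phi> x \<le> y - x" if "x \<le> y" for x y
  proof -
    have "0 \<le> \<Phi> y - \<Phi> x"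
      by (rule LIMSEQ_le_const[OF increment]) (use short_lift_increment[OF F that] in auto)
    moreover have "\<Phi> y - \<Phi> x \<le> y - x"
      by (rule LIMSEQ_le_const2[OF increment]) (use short_lift_increment[OF F that] in auto)
    ultimately show ?thesis by simp
  qed
  moreover have "\<Phi> (x + L0) = \<Phi> x + Linf" for x
  proof -
    have "(\<lambda>i. F i (x + L0) - F i 0) = (\<lambda>i. (F i x - F i 0) + L i)"
      using short_lift_add_period[OF F, of _ x] by (simp add: algebra_simps)
    then have "(\<lambda>i. F i (x + L0) - F i 0) \<longlonglongrightarrow> \<Phi> x + Linf"
      using tendsto_add[OF \<Phi>[of x] L] by simp
    then show ?thesis using \<Phi>[of "x + L0"] by (rule LIMSEQ_unique[rotated])
  qed
  ultimately have "short_lift L0 Linf \<Phi>" unfolding short_lift_def by blast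
  then show ?thesis using that increment by blast
qed

lemma circle_norm_tendsto:
  assumes L: "L \<longlonglongrightarrow> Linf" "\<And>i. 0 < L i" "0 < Linf"
    and u: "u \<longlonglongrightarrow> v" "\<And>i. 0 \<le> u i \<and> u i \<le> L i"
  shows "(\<lambda>i. circle_norm (L i) (u i)) \<longlonglongrightarrow> circle_norm Linf v"
proof -
  have "0 \<le> v" "v \<le> Linf"
    using LIMSEQ_le_const[OF u(1)] LIMSEQ_le[OF u(1) L(1)] u(2) by auto
  then have "circle_norm Linf v = min v (Linf - v)" by (rule circle_norm_eq_min[OF L(3)])
  moreover have "circle_norm (L i) (u i) = min (u i) (L i - u i)" for i
    using circle_norm_eq_min[OF L(2)] u(2) by auto
  ultimately show ?thesis by (simp add: tendsto_min tendsto_diff L(1) u(1))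
qed

lemma short_lift_continuous_on:
  assumes "short_lift L L' \<Phi>"
  shows "continuous_on S \<Phi>"
proof (rule lipschitz_on_continuous_on)
  show "1-lipschitz_on S \<Phi>"
  proof (rule lipschitz_on_leI)
    fix x y :: real assume "x \<le> y"
    then show "dist (\<Phi> x) (\<Phi> y) \<le> 1 * dist x y"
      using short_lift_increment[OF assms \<open>x \<le> y\<close>] by (simp add: dist_real_def)
  qed simp
qed

lemma short_lift_surj_on_period:
  assumes \<Phi>: "short_lift L L' \<Phi>" and L: "0 \<le> L" and v: "\<Phi> 0 \<le> v" "v \<le> \<Phi> 0 + L'"
  obtains x where "x \<in> {0..L}" "\<Phi> x = v"
proof -
  have "\<Phi> L = \<Phi> 0 + L'" using short_lift_add_period[OF \<Phi>, of 0] by simp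
  then obtain x where "0 \<le> x" "x \<le> L" "\<Phi> x = v"
    using IVT'[of \<Phi> 0 v L] short_lift_continuous_on[OF \<Phi>] L v by auto
  then show ?thesis using that by auto
qed

lemma circle_map_of_short_lift_surj:
  assumes L: "0 < L" and L': "0 < L'" and \<Phi>: "short_lift L L' \<Phi>"
  shows "(\<lambda>z. circle_point L' (\<Phi> (circle_coord L z) - \<Phi> 0)) ` rcircle L = rcircle L'"
proof
  show "(\<lambda>z. circle_point L' (\<Phi> (circle_coord L z) - \<Phi> 0)) ` rcircle L \<subseteq> rcircle L'"
    using circle_point_in_rcircle[OF L'] by blast
  show "rcircle L' \<subseteq> (\<lambda>z. circle_point L' (\<Phi> (circle_coord L z) - \<Phi> 0)) ` rcircle L"
  proof
    fix w assume "w \<in> rcircle L'"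
    then obtain v where v: "v \<in> {0..<L'}" "w = circle_point L' v"
      using rcircle_circle_point[OF L'] by metis
    then obtain x where x: "x \<in> {0..L}" "\<Phi> x = \<Phi> 0 + v"
      using short_lift_surj_on_period[OF \<Phi>, of "\<Phi> 0 + v"] L by auto
    have "x \<noteq> L" using x v short_lift_add_period[OF \<Phi>, of 0] by auto
    then have "circle_coord L (circle_point L x) = x" using x by (intro circle_coord_circle_point[OF L]) auto
    then have "w = circle_point L' (\<Phi> (circle_coord L (circle_point L x)) - \<Phi> 0)" using x v by simp
    then show "w \<in> (\<lambda>z. circle_point L' (\<Phi> (circle_coord L z) - \<Phi> 0)) ` rcircle L"
      using circle_point_in_rcircle[OF L] by blast
  qed
qed

lemma short_lifts_circle_norm_tendsto:
  assumes F: "\<And>i. short_lift L0 (L i) (F i)" and L: "L \<longlonglongrightarrow> Linf" "\<And>i. 0 < L i" "0 < Linf"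
    and \<Phi>: "\<And>x y. (\<lambda>i. F i y - F i x) \<longlonglongrightarrow> \<Phi> y - \<Phi> x"
    and xy: "\<bar>y - x\<bar> \<le> L0"
  shows "(\<lambda>i. circle_norm (L i) (F i y - F i x)) \<longlonglongrightarrow> circle_norm Linf (\<Phi> y - \<Phi> x)"
proof -
  have ordered: "(\<lambda>i. circle_norm (L i) (F i y - F i x)) \<longlonglongrightarrow> circle_norm Linf (\<Phi> y - \<Phi> x)"
    if "x \<le> y" "y \<le> x + L0" for x y
  proof (rule circle_norm_tendsto[OF L \<Phi>])
    fix i
    have "F i y \<le> F i (x + L0)" using short_lift_increment[OF F that(2)] by simp
    then show "0 \<le> F i y - F i x \<and> F i y - F i x \<le> L i"
      using short_lift_increment[OF F that(1)] short_lift_add_period[OF F] by simp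
  qed
  show ?thesis
  proof (cases "x \<le> y")
    case False
    have "circle_norm (L i) (F i y - F i x) = circle_norm (L i) (F i x - F i y)" for i
      using circle_norm_minus[OF L(2)[of i], of "F i x - F i y"] by simp
    moreover have "circle_norm Linf (\<Phi> y - \<Phi> x) = circle_norm Linf (\<Phi> x - \<Phi> y)"
      using circle_norm_minus[OF L(3), of "\<Phi> x - \<Phi> y"] by simp
    ultimately show ?thesis using ordered[of y x] xy False by simp
  qed (use ordered xy in simp)
qed

lemma circle_maps_converge:
  assumes L: "\<And>i. 0 < L i" "L \<longlonglongrightarrow> Linf" "0 < Linf"
    and \<sigma>: "\<And>i. \<sigma> i \<in> {1, -1}" and F: "\<And>i. short_lift (L 0) (L i) (F i)"
    and f: "\<And>i x. f i (circle_point (L 0) x) = circle_point (L i) (\<sigma> i * F i x)"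
    and dec: "\<And>i x y. x \<le> y \<Longrightarrow> F (Suc i) y - F (Suc i) x \<le> F i y - F i x"
  obtains q where "q ` rcircle (L 0) = rcircle Linf"
    "\<And>z w. z \<in> rcircle (L 0) \<Longrightarrow> w \<in> rcircle (L 0) \<Longrightarrow>
       (\<lambda>i. cdist (L i) (f i z) (f i w)) \<longlonglongrightarrow> cdist Linf (q z) (q w)"
proof -
  obtain \<Phi> where \<Phi>: "short_lift (L 0) Linf \<Phi>"
    and increment: "\<And>x y. (\<lambda>i. F i y - F i x) \<longlonglongrightarrow> \<Phi> y - \<Phi> x"
    using short_lifts_limit[OF F dec L(2)] by blast
  define q where "q z = circle_point Linf (\<Phi> (circle_coord (L 0) z) - \<Phi> 0)" for z
  have "(\<lambda>i. cdist (L i) (f i z) (f i w)) \<longlonglongrightarrow> cdist Linf (q z) (q w)"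
    if z: "z \<in> rcircle (L 0)" and w: "w \<in> rcircle (L 0)" for z w
  proof -
    define x y where "x = circle_coord (L 0) z" and "y = circle_coord (L 0) w"
    have "cdist (L i) (f i z) (f i w) = cdist (L i) (circle_point (L i) (\<sigma> i * F i x)) (circle_point (L i) (\<sigma> i * F i y))"
      for i using f[of i x] f[of i y] circle_coord(2)[OF L(1) z] circle_coord(2)[OF L(1) w]
      unfolding x_def y_def by simp
    also have "\<dots> i = circle_norm (L i) (- (\<sigma> i * (F i y - F i x)))" for i
      by (simp add: cdist_circle_point[OF L(1)] algebra_simps)
    also have "\<dots> i = circle_norm (L i) (F i y - F i x)" for i
      by (simp add: circle_norm_minus[OF L(1)] circle_norm_sign_mult[OF L(1) \<sigma>])
    finally have dist_i: "cdist (L i) (f i z) (f i w) = circle_norm (L i) (F i y - F i x)" for i .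
    have "cdist Linf (q z) (q w) = circle_norm Linf (\<Phi> x - \<Phi> y)"
      unfolding q_def cdist_circle_point[OF L(3)] x_def y_def by simp
    then have dist_lim: "cdist Linf (q z) (q w) = circle_norm Linf (\<Phi> y - \<Phi> x)"
      using circle_norm_minus[OF L(3), of "\<Phi> x - \<Phi> y"] by simp
    have "\<bar>y - x\<bar> \<le> L 0" using circle_coord(1)[OF L(1) z] circle_coord(1)[OF L(1) w] x_def y_def by auto
    then show ?thesis unfolding dist_i dist_lim
      by (rule short_lifts_circle_norm_tendsto[OF F L(2,1,3) increment])
  qed
  moreover have "q ` rcircle (L 0) = rcircle Linf"
    unfolding q_def by (rule circle_map_of_short_lift_surj[OF L(1) L(3) \<Phi>])
  ultimately show ?thesis using that by blast
qed

lemma pseudometric_on_cdist_comp: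
  assumes L: "0 < L" and q: "q ` X \<subseteq> rcircle L"
  shows "pseudometric_on X (\<lambda>x y. cdist L (q x) (q y))"
  unfolding pseudometric_on_def
proof (intro conjI ballI)
  fix x y z assume x: "x \<in> X" and y: "y \<in> X" and z: "z \<in> X"
  obtain u v w where uvw: "q x = circle_point L u" "q y = circle_point L v" "q z = circle_point L w"
    using rcircle_circle_point[OF L] q x y z by (metis image_subset_iff)
  show "cdist L (q x) (q x) = 0" using uvw circle_point_nonzero[OF L] by (simp add: cdist_def)
  show "0 \<le> cdist L (q x) (q y)" using uvw by (simp add: cdist_circle_point[OF L] circle_norm_nonneg[OF L])
  show "cdist L (q x) (q y) = cdist L (q y) (q x)" using q x y by (intro cdist_commute[OF L]) auto
  show "cdist L (q x) (q z) \<le> cdist L (q x) (q y) + cdist L (q y) (q z)"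
    using uvw circle_norm_triangle[OF L, of "u - v" "v - w"] by (simp add: cdist_circle_point[OF L])
qed

theorem lemma4p1:
  fixes L a :: "nat \<Rightarrow> real" and tight :: "nat \<Rightarrow> bool"
    and io ph :: "nat \<Rightarrow> real \<Rightarrow> complex" and pr :: "nat \<Rightarrow> complex \<Rightarrow> complex"
  assumes "tightening_seq L tight a io ph pr"
    and "completely_disjoint L tight a io pr"
    and "summable (Qlen L tight a)"
    and "suminf (Qlen L tight a) < L 0"
  shows "(\<forall>x\<in>rcircle (L 0). \<forall>y\<in>rcircle (L 0).
            convergent (\<lambda>i. cdist (L i) (pic pr i x) (pic pr i y)))
    \<and> pseudometric_on (rcircle (L 0)) (delta L pr)
    \<and> (\<exists>Linf. L \<longlonglongrightarrow> Linf \<and> 0 < Linf \<and>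
         (\<exists>q. q ` rcircle (L 0) = rcircle Linf \<and>
              (\<forall>x\<in>rcircle (L 0). \<forall>y\<in>rcircle (L 0). cdist Linf (q x) (q y) = delta L pr x y)))"
proof -
  note seq = assms(1)
  have L: "\<And>i. 0 < L i" using tightening_seq_lengths[OF seq] by auto
  obtain Linf where Linf: "L \<longlonglongrightarrow> Linf" "L 0 / 2 \<le> Linf"
    using tightening_seq_length_limit[OF seq] by blast
  then have "0 < Linf" using L[of 0] by simp
  obtain \<sigma> F where \<sigma>: "\<And>i. \<sigma> i \<in> {1, -1}" and F: "\<And>i. short_lift (L 0) (L i) (F i)"
    and lift: "\<And>i x. pic pr i (circle_point (L 0) x) = circle_point (L i) (\<sigma> i * F i x)"
    and dec: "\<And>i x y. x \<le> y \<Longrightarrow> F (Suc i) y - F (Suc i) x \<le> F i y - F i x"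
    using tightening_seq_lifts[OF seq] by blast
  obtain q where q: "q ` rcircle (L 0) = rcircle Linf"
    and conv: "\<And>z w. z \<in> rcircle (L 0) \<Longrightarrow> w \<in> rcircle (L 0) \<Longrightarrow>
       (\<lambda>i. cdist (L i) (pic pr i z) (pic pr i w)) \<longlonglongrightarrow> cdist Linf (q z) (q w)"
    using circle_maps_converge[OF L Linf(1) \<open>0 < Linf\<close> \<sigma> F lift dec] by blast
  have delta: "cdist Linf (q z) (q w) = delta L pr z w"
    if "z \<in> rcircle (L 0)" "w \<in> rcircle (L 0)" for z w
    unfolding delta_def using conv[OF that] by (rule limI[symmetric])
  have "pseudometric_on (rcircle (L 0)) (\<lambda>z w. cdist Linf (q z) (q w))"
    using q by (intro pseudometric_on_cdist_comp[OF \<open>0 < Linf\<close>]) simp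
  then have "pseudometric_on (rcircle (L 0)) (delta L pr)"
    unfolding pseudometric_on_def by (simp add: delta)
  moreover have "\<forall>z\<in>rcircle (L 0). \<forall>w\<in>rcircle (L 0).
      convergent (\<lambda>i. cdist (L i) (pic pr i z) (pic pr i w))"
    using conv unfolding convergent_def by blast
  ultimately show ?thesis using Linf(1) \<open>0 < Linf\<close> q delta by blast
qed

end
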